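(* If a partial coloring of an $n\times n$ square $A$ uniquely extends to $L(n,2n-2)$, then $A$ has no three uncolored entries in the same row, and no three uncolored entries in the same column.
   Context: For positive integers $n,k$, let $\mathcal{L}_{n,k}$ be the set of $n\times n$ squares all of whose entries are colored with colors from a fixed set of $k$ colors $\{1,\dots,k\}$ such that any two entries in the same row, or in the same column, have different colors. Entries are indexed $(i,j)$, $i$ the row and $j$ the column. A partial coloring of an $n\times n$ square assigns colors from $\{1,\dots,k\}$ to some of its entries; the remaining entries are called uncolored. A partial coloring extends to $L(n,k)$ if the uncolored entries can be colored so that the resulting fully colored square lies in $\mathcal{L}_{n,k}$ (keeping the given colors), and it uniquely extends to $L(n,k)$ if there is exactly one such way. *)

theory Defs
  imports Main
begin

definition in_L :: "nat \<Rightarrow> nat \<Rightarrow> (nat \<times> nat \<Rightarrow> nat) \<Rightarrow> bool" where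
  "in_L n k L \<longleftrightarrow>
     (\<forall>i<n. \<forall>j<n. L (i,j) \<in> {1..k}) \<and>
     (\<forall>i<n. \<forall>j<n. \<forall>j'<n. j \<noteq> j' \<longrightarrow> L (i,j) \<noteq> L (i,j')) \<and>
     (\<forall>i<n. \<forall>i'<n. \<forall>j<n. i \<noteq> i' \<longrightarrow> L (i,j) \<noteq> L (i',j))"

(* A partial coloring: None = uncolored, Some c = colored with c in {1..k}. *)
definition partial_coloring :: "nat \<Rightarrow> nat \<Rightarrow> (nat \<times> nat \<Rightarrow> nat option) \<Rightarrow> bool" where
  "partial_coloring n k A \<longleftrightarrow> (\<forall>i<n. \<forall>j<n. \<forall>c. A (i,j) = Some c \<longrightarrow> c \<in> {1..k})"

definition extension_of :: "nat \<Rightarrow> nat \<Rightarrow> (nat \<times> nat \<Rightarrow> nat option) \<Rightarrow> (nat \<times> nat \<Rightarrow> nat) \<Rightarrow> bool" where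
  "extension_of n k A L \<longleftrightarrow> in_L n k L \<and> (\<forall>i<n. \<forall>j<n. \<forall>c. A (i,j) = Some c \<longrightarrow> L (i,j) = c)"

(* Extensions are compared only on the square {0..<n} x {0..<n}. *)
definition uniquely_extends :: "nat \<Rightarrow> nat \<Rightarrow> (nat \<times> nat \<Rightarrow> nat option) \<Rightarrow> bool" where
  "uniquely_extends n k A \<longleftrightarrow>
     (\<exists>L. extension_of n k A L) \<and>
     (\<forall>L L'. extension_of n k A L \<longrightarrow> extension_of n k A L' \<longrightarrow>
        (\<forall>i<n. \<forall>j<n. L (i,j) = L' (i,j)))"

end

theory Submission
  imports Defs
begin

text \<open>Let \<open>L\<close> be the unique extension and suppose the entries \<open>(i,j\<^sub>1), (i,j\<^sub>2), (i,j\<^sub>3)\<close>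
are uncolored. Keeping the rest of \<open>L\<close> fixed, the entry \<open>(i,j\<^sub>t)\<close> may take any color not used
by the other \<open>n - 3\<close> entries of row \<open>i\<close> and the other \<open>n - 1\<close> entries of column \<open>j\<^sub>t\<close>. These
forbid at most \<open>2n - 4\<close> of the \<open>2n - 2\<close> colors, so each of the three entries has an admissible
color besides its own, and from three such pairs of admissible colors one can always pick
three distinct colors that differ from those of \<open>L\<close>. This gives a second extension. Columns
follow by transposition.\<close>

lemma in_L_range: "in_L n k L \<Longrightarrow> i < n \<Longrightarrow> j < n \<Longrightarrow> L (i, j) \<in> {1..k}"
  unfolding in_L_def by blast

lemma in_L_row:
  "in_L n k L \<Longrightarrow> i < n \<Longrightarrow> j < n \<Longrightarrow> j' < n \<Longrightarrow> j \<noteq> j' \<Longrightarrow> L (i, j) \<noteq> L (i, j')"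
  unfolding in_L_def by blast

lemma in_L_col:
  "in_L n k L \<Longrightarrow> i < n \<Longrightarrow> i' < n \<Longrightarrow> j < n \<Longrightarrow> i \<noteq> i' \<Longrightarrow> L (i, j) \<noteq> L (i', j)"
  unfolding in_L_def by blast

lemma in_L_transpose: "in_L n k (L \<circ> prod.swap) \<longleftrightarrow> in_L n k L"
  unfolding in_L_def by auto

lemma extension_of_transpose:
  "extension_of n k (A \<circ> prod.swap) (L \<circ> prod.swap) \<longleftrightarrow> extension_of n k A L"
  unfolding extension_of_def in_L_transpose by auto

lemma uniquely_extends_transpose:
  assumes "uniquely_extends n k A"
  shows "uniquely_extends n k (A \<circ> prod.swap)"
proof -
  have swap_swap: "L \<circ> prod.swap \<circ> prod.swap = L" for L :: "nat \<times> nat \<Rightarrow> nat"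
    by (simp add: fun_eq_iff)
  have ext: "extension_of n k (A \<circ> prod.swap) L \<longleftrightarrow> extension_of n k A (L \<circ> prod.swap)" for L
    using extension_of_transpose[of n k A "L \<circ> prod.swap"] by (simp add: swap_swap)
  show ?thesis
    using assms unfolding uniquely_extends_def ext
    by (metis comp_apply swap_simp swap_swap)
qed

text \<open>The colors available to entry \<open>(i,j)\<close> of \<open>L\<close> when the entries of row \<open>i\<close> in the
column set \<open>J\<close> are recolored simultaneously and everything else is kept.\<close>

definition free_colors ::
    "nat \<Rightarrow> nat \<Rightarrow> (nat \<times> nat \<Rightarrow> nat) \<Rightarrow> nat \<Rightarrow> nat set \<Rightarrow> nat \<Rightarrow> nat set" where
  "free_colors n k L i J j =
     {1..k} - L ` (Pair i ` ({..<n} - J) \<union> (\<lambda>i'. (i', j)) ` ({..<n} - {i}))"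

lemma color_in_free_colors:
  assumes L: "in_L n k L" and "i < n" "j < n" "j \<in> J"
  shows "L (i, j) \<in> free_colors n k L i J j"
  using assms in_L_row[OF L \<open>i < n\<close> \<open>j < n\<close>] in_L_col[OF L \<open>i < n\<close> _ \<open>j < n\<close>]
    in_L_range[OF L \<open>i < n\<close> \<open>j < n\<close>]
  unfolding free_colors_def by auto

lemma card_free_colors_ge:
  assumes "i < n" "J \<subseteq> {..<n}"
  shows "k + card J + 1 - 2 * n \<le> card (free_colors n k L i J j)"
proof -
  have fin_J: "finite J" using assms(2) finite_subset by blast
  have "card (Pair i ` ({..<n} - J)) \<le> n - card J"
    using card_image_le[of "{..<n} - J" "Pair i"] card_Diff_subset[OF fin_J assms(2)] by simp
  moreover have "card ((\<lambda>i'. (i', j)) ` ({..<n} - {i})) \<le> n - 1"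
    using card_image_le[of "{..<n} - {i}" "\<lambda>i'. (i', j)"] assms(1) by simp
  ultimately have "card (L ` (Pair i ` ({..<n} - J) \<union> (\<lambda>i'. (i', j)) ` ({..<n} - {i})))
      \<le> (n - card J) + (n - 1)"
    by (meson card_Un_le card_image_le finite_Un finite_Diff finite_imageI finite_lessThan
          add_mono le_trans)
  moreover have "card J \<le> n"
    using card_mono[OF _ assms(2)] by simp
  moreover have "k - card (L ` (Pair i ` ({..<n} - J) \<union> (\<lambda>i'. (i', j)) ` ({..<n} - {i})))
      \<le> card (free_colors n k L i J j)"
    unfolding free_colors_def using diff_card_le_card_Diff[of _ "{1..k}"] by simp
  ultimately show ?thesis using assms(1) by linarith
qed

lemma other_free_color:
  assumes "i < n" "J \<subseteq> {..<n}" "2 * n < k + card J"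
  obtains b where "b \<in> free_colors n k L i J j" "b \<noteq> L (i, j)"
proof -
  have "2 \<le> card (free_colors n k L i J j)"
    using card_free_colors_ge[of i n J k L j] assms by linarith
  moreover have "card (free_colors n k L i J j) \<le> 1" if "free_colors n k L i J j \<subseteq> {L (i, j)}"
    using card_mono[OF _ that] by simp
  ultimately show thesis using that by fastforce
qed

lemma in_L_recolor_row:
  assumes L: "in_L n k L" and "i < n"
    and free: "\<And>j. j \<in> J \<Longrightarrow> X j \<in> free_colors n k L i J j" and "inj_on X J"
  shows "in_L n k (\<lambda>(a, b). if a = i \<and> b \<in> J then X b else L (a, b))"
    (is "in_L n k ?L'")
proof -
  have X_range: "X b \<in> {1..k}"
    and X_row: "b' < n \<Longrightarrow> b' \<notin> J \<Longrightarrow> X b \<noteq> L (i, b')"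
    and X_col: "a < n \<Longrightarrow> a \<noteq> i \<Longrightarrow> X b \<noteq> L (a, b)" if "b \<in> J" for a b b'
    using free[OF that] unfolding free_colors_def by auto
  show ?thesis
    unfolding in_L_def
  proof (intro conjI allI impI)
    fix a b assume "a < n" "b < n"
    then show "?L' (a, b) \<in> {1..k}" using in_L_range[OF L] X_range by auto
  next
    fix a b b' assume "a < n" "b < n" "b' < n" "b \<noteq> b'"
    then show "?L' (a, b) \<noteq> ?L' (a, b')"
      using in_L_row[OF L] X_row \<open>inj_on X J\<close> by (auto simp: inj_on_eq_iff) (metis X_row)
  next
    fix a a' b assume "a < n" "a' < n" "b < n" "a \<noteq> a'"
    then show "?L' (a, b) \<noteq> ?L' (a', b)"
      using in_L_col[OF L] X_col by auto (metis X_col)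
  qed
qed

lemma uniquely_extends_recolor_row:
  assumes U: "uniquely_extends n k A" and E: "extension_of n k A L" and "i < n" "J \<subseteq> {..<n}"
    and uncolored: "\<And>j. j \<in> J \<Longrightarrow> A (i, j) = None"
    and free: "\<And>j. j \<in> J \<Longrightarrow> X j \<in> free_colors n k L i J j" and "inj_on X J"
    and "j \<in> J"
  shows "X j = L (i, j)"
proof -
  define L' where "L' = (\<lambda>(a, b). if a = i \<and> b \<in> J then X b else L (a, b))"
  have "in_L n k L'"
    unfolding L'_def using in_L_recolor_row E free \<open>i < n\<close> \<open>inj_on X J\<close>
    unfolding extension_of_def by blast
  hence "extension_of n k A L'"
    using E uncolored unfolding extension_of_def L'_def by auto
  hence "L (i, j) = L' (i, j)"
    using U E \<open>i < n\<close> \<open>j \<in> J\<close> \<open>J \<subseteq> {..<n}\<close> unfolding uniquely_extends_def by blast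
  thus ?thesis using \<open>j \<in> J\<close> unfolding L'_def by simp
qed

lemma other_distinct_triple:
  assumes "a\<^sub>1 \<noteq> a\<^sub>2" "a\<^sub>1 \<noteq> a\<^sub>3" "a\<^sub>2 \<noteq> a\<^sub>3"
    and "a\<^sub>1 \<in> S\<^sub>1" "a\<^sub>2 \<in> S\<^sub>2" "a\<^sub>3 \<in> S\<^sub>3" "b\<^sub>1 \<in> S\<^sub>1" "b\<^sub>2 \<in> S\<^sub>2" "b\<^sub>3 \<in> S\<^sub>3"
    and "b\<^sub>1 \<noteq> a\<^sub>1" "b\<^sub>2 \<noteq> a\<^sub>2" "b\<^sub>3 \<noteq> a\<^sub>3"
  obtains x\<^sub>1 x\<^sub>2 x\<^sub>3 where "x\<^sub>1 \<in> S\<^sub>1" "x\<^sub>2 \<in> S\<^sub>2" "x\<^sub>3 \<in> S\<^sub>3"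
    "x\<^sub>1 \<noteq> x\<^sub>2" "x\<^sub>1 \<noteq> x\<^sub>3" "x\<^sub>2 \<noteq> x\<^sub>3" "(x\<^sub>1, x\<^sub>2, x\<^sub>3) \<noteq> (a\<^sub>1, a\<^sub>2, a\<^sub>3)"
  using assms by (metis prod.inject)

lemma uniquely_extends_row_uncolored:
  assumes U: "uniquely_extends n k A" and "2 * n \<le> k + 2" and "i < n"
    and "j\<^sub>1 < n" "j\<^sub>2 < n" "j\<^sub>3 < n" "j\<^sub>1 \<noteq> j\<^sub>2" "j\<^sub>1 \<noteq> j\<^sub>3" "j\<^sub>2 \<noteq> j\<^sub>3"
    and "A (i, j\<^sub>1) = None" "A (i, j\<^sub>2) = None" "A (i, j\<^sub>3) = None"
  shows False
proof -
  obtain L where E: "extension_of n k A L" using U unfolding uniquely_extends_def by blast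
  hence L: "in_L n k L" unfolding extension_of_def by blast
  define J where "J = {j\<^sub>1, j\<^sub>2, j\<^sub>3}"
  define S where "S = free_colors n k L i J"
  have J: "J \<subseteq> {..<n}" "2 * n < k + card J"
    using assms unfolding J_def by auto
  have a: "L (i, j\<^sub>1) \<in> S j\<^sub>1" "L (i, j\<^sub>2) \<in> S j\<^sub>2" "L (i, j\<^sub>3) \<in> S j\<^sub>3"
    using color_in_free_colors[OF L \<open>i < n\<close>] assms unfolding S_def J_def by auto
  have a_distinct: "L (i, j\<^sub>1) \<noteq> L (i, j\<^sub>2)" "L (i, j\<^sub>1) \<noteq> L (i, j\<^sub>3)" "L (i, j\<^sub>2) \<noteq> L (i, j\<^sub>3)"
    using in_L_row[OF L \<open>i < n\<close>] assms by auto
  obtain b\<^sub>1 where b\<^sub>1: "b\<^sub>1 \<in> S j\<^sub>1" "b\<^sub>1 \<noteq> L (i, j\<^sub>1)"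
    using other_free_color[OF \<open>i < n\<close> J] unfolding S_def by blast
  obtain b\<^sub>2 where b\<^sub>2: "b\<^sub>2 \<in> S j\<^sub>2" "b\<^sub>2 \<noteq> L (i, j\<^sub>2)"
    using other_free_color[OF \<open>i < n\<close> J] unfolding S_def by blast
  obtain b\<^sub>3 where b\<^sub>3: "b\<^sub>3 \<in> S j\<^sub>3" "b\<^sub>3 \<noteq> L (i, j\<^sub>3)"
    using other_free_color[OF \<open>i < n\<close> J] unfolding S_def by blast
  obtain x\<^sub>1 x\<^sub>2 x\<^sub>3 where x: "x\<^sub>1 \<in> S j\<^sub>1" "x\<^sub>2 \<in> S j\<^sub>2" "x\<^sub>3 \<in> S j\<^sub>3"
      "x\<^sub>1 \<noteq> x\<^sub>2" "x\<^sub>1 \<noteq> x\<^sub>3" "x\<^sub>2 \<noteq> x\<^sub>3"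
    and other: "(x\<^sub>1, x\<^sub>2, x\<^sub>3) \<noteq> (L (i, j\<^sub>1), L (i, j\<^sub>2), L (i, j\<^sub>3))"
    by (rule other_distinct_triple[OF a_distinct a b\<^sub>1(1) b\<^sub>2(1) b\<^sub>3(1) b\<^sub>1(2) b\<^sub>2(2) b\<^sub>3(2)])
  define X where "X j = (if j = j\<^sub>1 then x\<^sub>1 else if j = j\<^sub>2 then x\<^sub>2 else x\<^sub>3)" for j
  have "X j \<in> free_colors n k L i J j" if "j \<in> J" for j
    using that x unfolding X_def J_def S_def by auto
  moreover have "inj_on X J"
    using x assms unfolding inj_on_def X_def J_def by auto
  moreover have "A (i, j) = None" if "j \<in> J" for j
    using that assms unfolding J_def by auto
  ultimately have X_eq: "X j = L (i, j)" if "j \<in> J" for j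
    using uniquely_extends_recolor_row[OF U E \<open>i < n\<close> J(1)] that by blast
  have "x\<^sub>1 = L (i, j\<^sub>1)" "x\<^sub>2 = L (i, j\<^sub>2)" "x\<^sub>3 = L (i, j\<^sub>3)"
    using X_eq[of j\<^sub>1] X_eq[of j\<^sub>2] X_eq[of j\<^sub>3] assms unfolding X_def J_def by auto
  with other show False by simp
qed

theorem lemma1:
  fixes n :: nat and A :: "nat \<times> nat \<Rightarrow> nat option"
  assumes "n \<ge> 1"
    and "partial_coloring n (2*n-2) A"
    and "uniquely_extends n (2*n-2) A"
  shows "(\<forall>i<n. \<not> (\<exists>j1 j2 j3. j1 < n \<and> j2 < n \<and> j3 < n \<and> j1 \<noteq> j2 \<and> j1 \<noteq> j3 \<and> j2 \<noteq> j3 \<and>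
                 A (i,j1) = None \<and> A (i,j2) = None \<and> A (i,j3) = None)) \<and>
         (\<forall>j<n. \<not> (\<exists>i1 i2 i3. i1 < n \<and> i2 < n \<and> i3 < n \<and> i1 \<noteq> i2 \<and> i1 \<noteq> i3 \<and> i2 \<noteq> i3 \<and>
                 A (i1,j) = None \<and> A (i2,j) = None \<and> A (i3,j) = None))"
proof (intro conjI allI impI notI)
  fix i assume "i < n" and "\<exists>j1 j2 j3. j1 < n \<and> j2 < n \<and> j3 < n \<and> j1 \<noteq> j2 \<and> j1 \<noteq> j3 \<and>
      j2 \<noteq> j3 \<and> A (i,j1) = None \<and> A (i,j2) = None \<and> A (i,j3) = None"
  then show False
    using uniquely_extends_row_uncolored[OF assms(3), of i] by fastforce
next
  fix j assume "j < n" and "\<exists>i1 i2 i3. i1 < n \<and> i2 < n \<and> i3 < n \<and> i1 \<noteq> i2 \<and> i1 \<noteq> i3 \<and>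
      i2 \<noteq> i3 \<and> A (i1,j) = None \<and> A (i2,j) = None \<and> A (i3,j) = None"
  then show False
    using uniquely_extends_row_uncolored[OF uniquely_extends_transpose[OF assms(3)], of j]
    by fastforce
qed

end
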